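(* Let $Q$ be a quiver and let $U_\sigma$ be an affine toric variety (with torus $T$) having a unique $T$-fixed point $p$. Suppose that to each arrow $\alpha$ of $Q$ is assigned a regular function $f_\alpha$ on $U_\sigma$ which is either $0$ or a $T$-eigenfunction (a character monomial regular on $U_\sigma$), and for $q\in U_\sigma$ let $V_q$ be the representation of $Q$ with dimension vector $(1,\dots,1)$ representing $\alpha$ by $f_\alpha(q)$. Let $\theta\in\mathrm{Wt}(Q)$. If $V_p$ is $\theta$-stable (resp. $\theta$-semistable), then $V_q$ is $\theta$-stable (resp. $\theta$-semistable) for every $q\in U_\sigma$.
   Context: For a quiver $Q$ with vertex set $Q^0$, $\mathrm{Wt}(Q)=\{\theta:Q^0\to\mathbb Q:\sum_{v\in Q^0}\theta(v)=0\}$. For a representation $V$ with dimension vector $(1,\dots,1)$ (a complex number $V(\alpha)$ for each arrow $\alpha$), subrepresentations correspond to subsets $S\subseteq Q^0$ such that whenever $\alpha$ has tail in $S$ and $V(\alpha)\ne0$ its head lies in $S$; put $\theta(S)=\sum_{v\in S}\theta(v)$. $V$ is $\theta$-stable (resp. $\theta$-semistable) if $\theta(S)>0$ (resp. $\ge0$) for every non-empty proper such subset $S$. *)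

theory Defs
  imports "HOL-Analysis.Analysis"
begin

record ('v, 'a) quiver =
  verts :: "'v set"
  arrs  :: "'a set"
  tl    :: "'a \<Rightarrow> 'v"
  hd    :: "'a \<Rightarrow> 'v"

definition is_quiver :: "('v, 'a) quiver \<Rightarrow> bool" where
  "is_quiver Q \<longleftrightarrow> finite (verts Q) \<and> finite (arrs Q) \<and>
     (\<forall>\<alpha>\<in>arrs Q. tl Q \<alpha> \<in> verts Q \<and> hd Q \<alpha> \<in> verts Q)"

definition Wt :: "('v, 'a) quiver \<Rightarrow> ('v \<Rightarrow> rat) set" where
  "Wt Q = {\<theta>. (\<Sum>v\<in>verts Q. \<theta> v) = 0}"

text \<open>A representation with dimension vector (1,...,1) is a complex number per arrow.
  Subrepresentations correspond to subsets S of vertices closed under nonzero arrows.\<close>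
definition subrep_set :: "('v, 'a) quiver \<Rightarrow> ('a \<Rightarrow> complex) \<Rightarrow> 'v set \<Rightarrow> bool" where
  "subrep_set Q V S \<longleftrightarrow> S \<subseteq> verts Q \<and>
     (\<forall>\<alpha>\<in>arrs Q. tl Q \<alpha> \<in> S \<and> V \<alpha> \<noteq> 0 \<longrightarrow> hd Q \<alpha> \<in> S)"

definition theta_of :: "('v \<Rightarrow> rat) \<Rightarrow> 'v set \<Rightarrow> rat" where
  "theta_of \<theta> S = (\<Sum>v\<in>S. \<theta> v)"

definition theta_stable :: "('v, 'a) quiver \<Rightarrow> ('v \<Rightarrow> rat) \<Rightarrow> ('a \<Rightarrow> complex) \<Rightarrow> bool" where
  "theta_stable Q \<theta> V \<longleftrightarrow>
     (\<forall>S. subrep_set Q V S \<and> S \<noteq> {} \<and> S \<noteq> verts Q \<longrightarrow> theta_of \<theta> S > 0)"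

definition theta_semistable :: "('v, 'a) quiver \<Rightarrow> ('v \<Rightarrow> rat) \<Rightarrow> ('a \<Rightarrow> complex) \<Rightarrow> bool" where
  "theta_semistable Q \<theta> V \<longleftrightarrow>
     (\<forall>S. subrep_set Q V S \<and> S \<noteq> {} \<and> S \<noteq> verts Q \<longrightarrow> theta_of \<theta> S \<ge> 0)"

text \<open>Lattices N = M = Z^n (n = CARD('n)), with the standard pairing.
  The cone sigma in N_R is generated by a finite set G of lattice vectors.\<close>

definition pairing :: "int ^ 'n::finite \<Rightarrow> int ^ 'n \<Rightarrow> int" where
  "pairing m u = (\<Sum>i\<in>UNIV. m $ i * u $ i)"

definition real_vec :: "int ^ 'n::finite \<Rightarrow> real ^ 'n" where
  "real_vec u = (\<chi> i. real_of_int (u $ i))"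

definition cone_of :: "(int ^ 'n::finite) set \<Rightarrow> (real ^ 'n) set" where
  "cone_of G = {x. \<exists>c. (\<forall>u\<in>G. c u \<ge> 0) \<and> x = (\<Sum>u\<in>G. c u *\<^sub>R real_vec u)}"

definition strongly_convex_rat_cone :: "(int ^ 'n::finite) set \<Rightarrow> bool" where
  "strongly_convex_rat_cone G \<longleftrightarrow> finite G \<and>
     (\<forall>x. x \<in> cone_of G \<and> - x \<in> cone_of G \<longrightarrow> x = 0)"

definition dual_monoid :: "(int ^ 'n::finite) set \<Rightarrow> (int ^ 'n) set" where
  "dual_monoid G = {m. \<forall>u\<in>G. pairing m u \<ge> 0}"

text \<open>Closed points of U_sigma = Spec C[S_sigma] are monoid homomorphisms
  (S_sigma,+) \<rightarrow> (C,*); we use the extensional convention that the function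
  is 0 outside S_sigma.\<close>
definition toric_points :: "(int ^ 'n::finite) set \<Rightarrow> (int ^ 'n \<Rightarrow> complex) set" where
  "toric_points G = {q. q 0 = 1 \<and>
      (\<forall>m\<in>dual_monoid G. \<forall>m'\<in>dual_monoid G. q (m + m') = q m * q m') \<and>
      (\<forall>m. m \<notin> dual_monoid G \<longrightarrow> q m = 0)}"

definition torus :: "(int ^ 'n::finite \<Rightarrow> complex) set" where
  "torus = {t. t 0 = 1 \<and> (\<forall>m m'. t (m + m') = t m * t m')}"

definition torus_act :: "(int ^ 'n::finite \<Rightarrow> complex) \<Rightarrow> (int ^ 'n \<Rightarrow> complex) \<Rightarrow> (int ^ 'n \<Rightarrow> complex)" where
  "torus_act t q = (\<lambda>m. t m * q m)"

definition torus_fixed :: "(int ^ 'n::finite \<Rightarrow> complex) \<Rightarrow> bool" where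
  "torus_fixed q \<longleftrightarrow> (\<forall>t\<in>torus. torus_act t q = q)"

definition character_fun :: "int ^ 'n::finite \<Rightarrow> (int ^ 'n \<Rightarrow> complex) \<Rightarrow> complex" where
  "character_fun m q = q m"

definition T_eigenfunction :: "(int ^ 'n::finite) set \<Rightarrow> ((int ^ 'n \<Rightarrow> complex) \<Rightarrow> complex) \<Rightarrow> bool" where
  "T_eigenfunction G f \<longleftrightarrow> (\<exists>c m. c \<noteq> 0 \<and> m \<in> dual_monoid G \<and>
      (\<forall>q\<in>toric_points G. f q = c * character_fun m q))"

end

theory Submission
  imports Defs
begin

text \<open>A \<open>T\<close>-fixed point vanishes on every nontrivial character, so a \<open>T\<close>-eigenfunction that
  is nonzero at the fixed point has trivial weight and is a nonzero constant on \<open>U\<^sub>\<sigma>\<close>.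
  Hence every arrow acting nontrivially in \<open>V\<^sub>p\<close> acts nontrivially in every \<open>V\<^sub>q\<close>; a
  subrepresentation of \<open>V\<^sub>q\<close> is then also one of \<open>V\<^sub>p\<close>, and (semi)stability passes from
  \<open>V\<^sub>p\<close> to \<open>V\<^sub>q\<close>.\<close>

lemma torus_fixed_vanishes:
  fixes p :: "int ^ 'n::finite \<Rightarrow> complex"
  assumes "torus_fixed p" and "m \<noteq> 0"
  shows "p m = 0"
proof -
  from assms(2) obtain i where i: "m $ i \<noteq> 0" by (metis vec_eq_iff zero_index)
  define t where "t = (\<lambda>m::int^'n. exp (complex_of_real (real_of_int (m $ i))))"
  have "t \<in> torus" unfolding torus_def t_def
    by (simp add: exp_add[symmetric] algebra_simps)
  then have "t m * p m = p m"
    using assms(1) unfolding torus_fixed_def torus_act_def by metis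
  moreover have "t m \<noteq> 1"
  proof
    assume "t m = 1"
    then have "exp (real_of_int (m $ i)) = 1"
      unfolding t_def by (metis exp_of_real of_real_eq_1_iff)
    with i show False by simp
  qed
  ultimately show ?thesis by (metis mult_cancel_right1)
qed

lemma T_eigenfunction_nonzero_everywhere:
  assumes "T_eigenfunction G f"
    and "p \<in> toric_points G" and "torus_fixed p" and "f p \<noteq> 0"
    and "q \<in> toric_points G"
  shows "f q \<noteq> 0"
proof -
  obtain c m where "c \<noteq> 0" and f: "\<forall>q\<in>toric_points G. f q = c * character_fun m q"
    using assms(1) unfolding T_eigenfunction_def by blast
  have "p m \<noteq> 0" using f assms(2,4) by (simp add: character_fun_def)
  then have "m = 0" using torus_fixed_vanishes[OF assms(3)] by blast
  then show ?thesis
    using f assms(5) \<open>c \<noteq> 0\<close> by (simp add: character_fun_def toric_points_def)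
qed

lemma subrep_set_antimono:
  assumes "\<forall>\<alpha>\<in>arrs Q. V \<alpha> \<noteq> 0 \<longrightarrow> W \<alpha> \<noteq> 0" and "subrep_set Q W S"
  shows "subrep_set Q V S"
  using assms unfolding subrep_set_def by blast

lemma theta_stable_mono:
  assumes "\<forall>\<alpha>\<in>arrs Q. V \<alpha> \<noteq> 0 \<longrightarrow> W \<alpha> \<noteq> 0" and "theta_stable Q \<theta> V"
  shows "theta_stable Q \<theta> W"
  using assms subrep_set_antimono unfolding theta_stable_def by blast

lemma theta_semistable_mono:
  assumes "\<forall>\<alpha>\<in>arrs Q. V \<alpha> \<noteq> 0 \<longrightarrow> W \<alpha> \<noteq> 0" and "theta_semistable Q \<theta> V"
  shows "theta_semistable Q \<theta> W"
  using assms subrep_set_antimono unfolding theta_semistable_def by blast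

theorem mainTheorem13:
  fixes Q :: "('v, 'a) quiver"
    and G :: "(int ^ 'n::finite) set"
    and f :: "'a \<Rightarrow> (int ^ 'n \<Rightarrow> complex) \<Rightarrow> complex"
    and p :: "int ^ 'n \<Rightarrow> complex"
    and \<theta> :: "'v \<Rightarrow> rat"
  assumes "is_quiver Q"
    and "strongly_convex_rat_cone G"
    and "p \<in> toric_points G"
    and "\<forall>q\<in>toric_points G. torus_fixed q \<longleftrightarrow> q = p"
    and "\<forall>\<alpha>\<in>arrs Q. (\<forall>q\<in>toric_points G. f \<alpha> q = 0) \<or> T_eigenfunction G (f \<alpha>)"
    and "\<theta> \<in> Wt Q"
  shows "(theta_stable Q \<theta> (\<lambda>\<alpha>. f \<alpha> p) \<longrightarrow>
            (\<forall>q\<in>toric_points G. theta_stable Q \<theta> (\<lambda>\<alpha>. f \<alpha> q))) \<and>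
         (theta_semistable Q \<theta> (\<lambda>\<alpha>. f \<alpha> p) \<longrightarrow>
            (\<forall>q\<in>toric_points G. theta_semistable Q \<theta> (\<lambda>\<alpha>. f \<alpha> q)))"
proof -
  have "torus_fixed p" using assms(3,4) by blast
  then have support: "\<forall>\<alpha>\<in>arrs Q. f \<alpha> p \<noteq> 0 \<longrightarrow> f \<alpha> q \<noteq> 0" if "q \<in> toric_points G" for q
    using assms(3,5) that T_eigenfunction_nonzero_everywhere by metis
  show ?thesis
    using theta_stable_mono[OF support] theta_semistable_mono[OF support] by blast
qed

end
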